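(* Let $R\colon \mathbf{EA}\to[\mathbf{FinBool}^{op},\mathbf{Set}]$ and $L\colon[\mathbf{FinBool}^{op},\mathbf{Set}]\to\mathbf{EA}$ be the functors defined below, with $L$ left adjoint to $R$. The adjunction $L\dashv R$ is a reflection. More precisely, for every effect algebra $A$, the cocone under the diagram $D_A\colon \int R(A)\to\mathbf{EA}$ whose component at an object $(2^{[n]},g)$ is the morphism $g\colon 2^{[n]}\to A$ itself is a colimiting cocone. Consequently $L(R(A))\cong A$, naturally in $A$, i.e. the counit of the adjunction is an isomorphism.
   Context: An effect algebra is a partial algebra $(A;+,0,1)$, with a binary partial operation $+$ and constants $0,1$, satisfying: (E1) if $a+b$ is defined, then $b+a$ is defined and $a+b=b+a$; (E2) if $a+b$ and $(a+b)+c$ are defined, then $b+c$ and $a+(b+c)$ are defined and $(a+b)+c=a+(b+c)$; (E3) for every $a$ there is a unique $a^\perp$ such that $a+a^\perp=1$; (E4) if $a+1$ is defined, then $a=0$. One-element effect algebras (with $0=1$) are allowed. We write $a\perp b$ when $a+b$ is defined. A morphism of effect algebras $f\colon A_1\to A_2$ is a map with $f(1)=1$ such that $a\perp b$ implies $f(a)\perp f(b)$ and $f(a+b)=f(a)+f(b)$. $\mathbf{EA}$ denotes the category of effect algebras. Every Boolean algebra is an effect algebra: $x\perp y$ iff $x\wedge y=0$, and then $x+y=x\vee y$. This makes $\mathbf{Bool}$ a full subcategory of $\mathbf{EA}$. An observable is an $\mathbf{EA}$-morphism from a Boolean algebra into an effect algebra. For $n\in\mathbb N$ let $[n]=\{1,\dots,n\}$,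 with $[0]=\emptyset$. $\mathbf{FinBool}$ is the full subcategory of $\mathbf{Bool}$ on the objects $2^{[n]}$ (power-set Boolean algebras), $n\in\mathbb N$. $E\colon\mathbf{FinBool}\to\mathbf{EA}$ is the resulting fully faithful inclusion. $R(A)$ is the presheaf $R(A)(2^{[n]})=\mathbf{EA}(E(2^{[n]}),A)$, with $R(A)(f)(g)=g\circ E(f)$. For a presheaf $P$ on $\mathbf{FinBool}$, the category of elements $\int P$ has: - objects: pairs $(2^{[n]},g)$ with $g\in P(2^{[n]})$; - arrows $(2^{[n]},g)\to(2^{[n']},g')$: Boolean algebra morphisms $f\colon 2^{[n]}\to 2^{[n']}$ with $P(f)(g')=g$. For $P=R(A)$, this last condition reads $g'\circ f=g$. $\pi_P\colon\int P\to\mathbf{FinBool}$ is the projection. $L(P)=\varinjlim(E\circ\pi_P)$. $D_A$ denotes $E\circ\pi_{R(A)}\colon\int R(A)\to\mathbf{EA}$. *)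

theory Defs
  imports Main
begin

record 'a eff_alg =
  ea_carrier :: "'a set"
  ea_psum :: "'a \<Rightarrow> 'a \<Rightarrow> 'a option"
  ea_zero :: 'a
  ea_one :: 'a

definition ea_perp :: "'a eff_alg \<Rightarrow> 'a \<Rightarrow> 'a \<Rightarrow> bool" where
  "ea_perp A a b \<longleftrightarrow> ea_psum A a b \<noteq> None"

definition ea_plus :: "'a eff_alg \<Rightarrow> 'a \<Rightarrow> 'a \<Rightarrow> 'a" where
  "ea_plus A a b = the (ea_psum A a b)"

definition effect_algebra :: "'a eff_alg \<Rightarrow> bool" where
  "effect_algebra A \<longleftrightarrow>
     ea_zero A \<in> ea_carrier A \<and> ea_one A \<in> ea_carrier A \<and>
     (\<forall>a\<in>ea_carrier A. \<forall>b\<in>ea_carrier A.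
        ea_perp A a b \<longrightarrow> ea_plus A a b \<in> ea_carrier A) \<and>
     \<comment> \<open>(E1)\<close>
     (\<forall>a\<in>ea_carrier A. \<forall>b\<in>ea_carrier A.
        ea_perp A a b \<longrightarrow> ea_perp A b a \<and> ea_plus A a b = ea_plus A b a) \<and>
     \<comment> \<open>(E2)\<close>
     (\<forall>a\<in>ea_carrier A. \<forall>b\<in>ea_carrier A. \<forall>c\<in>ea_carrier A.
        ea_perp A a b \<and> ea_perp A (ea_plus A a b) c \<longrightarrow>
          ea_perp A b c \<and> ea_perp A a (ea_plus A b c) \<and>
          ea_plus A (ea_plus A a b) c = ea_plus A a (ea_plus A b c)) \<and>
     \<comment> \<open>(E3)\<close>
     (\<forall>a\<in>ea_carrier A. \<exists>!b. b \<in> ea_carrier A \<and> ea_perp A a b \<and> ea_plus A a b = ea_one A) \<and>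
     \<comment> \<open>(E4)\<close>
     (\<forall>a\<in>ea_carrier A. ea_perp A a (ea_one A) \<longrightarrow> a = ea_zero A)"

definition ea_hom :: "'a eff_alg \<Rightarrow> 'b eff_alg \<Rightarrow> ('a \<Rightarrow> 'b) \<Rightarrow> bool" where
  "ea_hom A B f \<longleftrightarrow>
     (\<forall>a\<in>ea_carrier A. f a \<in> ea_carrier B) \<and>
     f (ea_one A) = ea_one B \<and>
     (\<forall>a\<in>ea_carrier A. \<forall>b\<in>ea_carrier A. ea_perp A a b \<longrightarrow>
        ea_perp B (f a) (f b) \<and> f (ea_plus A a b) = ea_plus B (f a) (f b))"

text \<open>The power-set Boolean algebra of [n] = {1..n}, viewed as an effect algebra.\<close>

definition bool_ea :: "nat \<Rightarrow> nat set eff_alg" where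
  "bool_ea n = \<lparr> ea_carrier = Pow {1..n},
                 ea_psum = (\<lambda>x y. if x \<inter> y = {} then Some (x \<union> y) else None),
                 ea_zero = {}, ea_one = {1..n} \<rparr>"

definition bool_hom :: "nat \<Rightarrow> nat \<Rightarrow> (nat set \<Rightarrow> nat set) \<Rightarrow> bool" where
  "bool_hom n m f \<longleftrightarrow>
     (\<forall>x\<in>Pow {1..n}. f x \<in> Pow {1..m}) \<and>
     f {} = {} \<and> f {1..n} = {1..m} \<and>
     (\<forall>x\<in>Pow {1..n}. \<forall>y\<in>Pow {1..n}. f (x \<union> y) = f x \<union> f y \<and> f (x \<inter> y) = f x \<inter> f y) \<and>
     (\<forall>x\<in>Pow {1..n}. f ({1..n} - x) = {1..m} - f x)"

text \<open>Objects (2^[n], g) of the category of elements of R(A).\<close>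

definition elem_obj :: "'a eff_alg \<Rightarrow> nat \<Rightarrow> (nat set \<Rightarrow> 'a) \<Rightarrow> bool" where
  "elem_obj A n g \<longleftrightarrow> ea_hom (bool_ea n) A g"

definition elem_arr :: "'a eff_alg \<Rightarrow> nat \<Rightarrow> (nat set \<Rightarrow> 'a) \<Rightarrow> nat \<Rightarrow> (nat set \<Rightarrow> 'a)
                        \<Rightarrow> (nat set \<Rightarrow> nat set) \<Rightarrow> bool" where
  "elem_arr A n g n' g' f \<longleftrightarrow>
     elem_obj A n g \<and> elem_obj A n' g' \<and> bool_hom n n' f \<and>
     (\<forall>x\<in>Pow {1..n}. g' (f x) = g x)"

text \<open>A cocone under D_A with apex B: components h n g : 2^[n] -> B, compatible with arrows.\<close>

definition cocone_DA :: "'a eff_alg \<Rightarrow> 'b eff_alg \<Rightarrow> (nat \<Rightarrow> (nat set \<Rightarrow> 'a) \<Rightarrow> nat set \<Rightarrow> 'b) \<Rightarrow> bool" where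
  "cocone_DA A B h \<longleftrightarrow>
     (\<forall>n g. elem_obj A n g \<longrightarrow> ea_hom (bool_ea n) B (h n g)) \<and>
     (\<forall>n g n' g' f. elem_arr A n g n' g' f \<longrightarrow>
        (\<forall>x\<in>Pow {1..n}. h n' g' (f x) = h n g x))"

definition mediates :: "'a eff_alg \<Rightarrow> (nat \<Rightarrow> (nat set \<Rightarrow> 'a) \<Rightarrow> nat set \<Rightarrow> 'c)
                        \<Rightarrow> (nat \<Rightarrow> (nat set \<Rightarrow> 'a) \<Rightarrow> nat set \<Rightarrow> 'b) \<Rightarrow> ('c \<Rightarrow> 'b) \<Rightarrow> bool" where
  "mediates A k h u \<longleftrightarrow>
     (\<forall>n g. elem_obj A n g \<longrightarrow> (\<forall>x\<in>Pow {1..n}. u (k n g x) = h n g x))"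

text \<open>The cocone k with apex C under D_A is colimiting in EA, tested against apexes of type 'b:
  every cocone factors through it by a unique EA-morphism (uniqueness on the carrier of C).\<close>

definition colimiting_DA :: "'a eff_alg \<Rightarrow> 'c eff_alg \<Rightarrow> (nat \<Rightarrow> (nat set \<Rightarrow> 'a) \<Rightarrow> nat set \<Rightarrow> 'c)
                             \<Rightarrow> 'b itself \<Rightarrow> bool" where
  "colimiting_DA A C k (_ :: 'b itself) \<longleftrightarrow>
     cocone_DA A C k \<and>
     (\<forall>(B :: 'b eff_alg) h. effect_algebra B \<and> cocone_DA A B h \<longrightarrow>
        (\<exists>u. ea_hom C B u \<and> mediates A k h u \<and>
             (\<forall>v. ea_hom C B v \<and> mediates A k h v \<longrightarrow> (\<forall>c\<in>ea_carrier C. v c = u c))))"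

end

theory Submission
  imports Defs
begin

text \<open>
  For \<open>a \<perp> b\<close> let \<open>obs a b : 2^[3] \<rightarrow> A\<close> be the observable of the partition
  \<open>a, b, (a \<oplus> b)\<^sup>\<perp>\<close> of the unit. A cocone \<open>h\<close> under \<open>D_A\<close> induces \<open>u a = h_(3, obs a 0) {1}\<close>.
  It factors every component \<open>h_(n, g)\<close>: for \<open>x \<subseteq> [n]\<close> the Boolean morphism \<open>2^[3] \<rightarrow> 2^[n]\<close>
  sending \<open>{1}\<close> to \<open>x\<close> and \<open>{3}\<close> to \<open>[n] - x\<close> is an arrow \<open>(3, obs (g x) 0) \<rightarrow> (n, g)\<close>,
  so compatibility gives \<open>h_(n, g) x = u (g x)\<close>. Evaluating \<open>h_(3, obs a b)\<close> at \<open>{1}\<close>, \<open>{2}\<close>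
  and \<open>{1, 2}\<close> shows that \<open>u\<close> preserves \<open>\<oplus>\<close>, and every factorization \<open>v\<close> satisfies
  \<open>v a = v (obs a 0 {1}) = u a\<close>.
\<close>

locale eff_algebra =
  fixes A :: "'a eff_alg"
  assumes effect_algebra: "effect_algebra A"
begin

abbreviation perp (infix "\<perp>" 50) where "a \<perp> b \<equiv> ea_perp A a b"
abbreviation plus (infixl "\<oplus>" 65) where "a \<oplus> b \<equiv> ea_plus A a b"
abbreviation zero ("\<zero>") where "\<zero> \<equiv> ea_zero A"
abbreviation one ("\<one>") where "\<one> \<equiv> ea_one A"

lemma zero_closed: "\<zero> \<in> ea_carrier A"
  and one_closed: "\<one> \<in> ea_carrier A"
  using effect_algebra unfolding effect_algebra_def by blast+

lemma plus_closed: "\<lbrakk>a \<in> ea_carrier A; b \<in> ea_carrier A; a \<perp> b\<rbrakk> \<Longrightarrow> a \<oplus> b \<in> ea_carrier A"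
  using effect_algebra unfolding effect_algebra_def by blast

lemma perp_commute: "\<lbrakk>a \<in> ea_carrier A; b \<in> ea_carrier A; a \<perp> b\<rbrakk> \<Longrightarrow> b \<perp> a"
  and plus_commute: "\<lbrakk>a \<in> ea_carrier A; b \<in> ea_carrier A; a \<perp> b\<rbrakk> \<Longrightarrow> a \<oplus> b = b \<oplus> a"
  using effect_algebra unfolding effect_algebra_def by blast+

lemma plus_assoc:
  assumes "a \<in> ea_carrier A" "b \<in> ea_carrier A" "c \<in> ea_carrier A" "a \<perp> b" "a \<oplus> b \<perp> c"
  shows "b \<perp> c" "a \<perp> b \<oplus> c" "a \<oplus> b \<oplus> c = a \<oplus> (b \<oplus> c)"
  using effect_algebra assms unfolding effect_algebra_def by blast+

lemma orthosupplement_ex1: "a \<in> ea_carrier A \<Longrightarrow> \<exists>!b. b \<in> ea_carrier A \<and> a \<perp> b \<and> a \<oplus> b = \<one>"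
  using effect_algebra unfolding effect_algebra_def by (elim conjE) (erule bspec)

lemma perp_one_eq_zero: "\<lbrakk>a \<in> ea_carrier A; a \<perp> \<one>\<rbrakk> \<Longrightarrow> a = \<zero>"
  using effect_algebra unfolding effect_algebra_def by (elim conjE) blast

definition orthosupp :: "'a \<Rightarrow> 'a" where
  "orthosupp a = (THE b. b \<in> ea_carrier A \<and> a \<perp> b \<and> a \<oplus> b = \<one>)"

lemma orthosupp_closed: "a \<in> ea_carrier A \<Longrightarrow> orthosupp a \<in> ea_carrier A"
  and perp_orthosupp: "a \<in> ea_carrier A \<Longrightarrow> a \<perp> orthosupp a"
  and plus_orthosupp: "a \<in> ea_carrier A \<Longrightarrow> a \<oplus> orthosupp a = \<one>"
  unfolding orthosupp_def using theI'[OF orthosupplement_ex1] by blast+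

lemma orthosupp_unique: "\<lbrakk>a \<in> ea_carrier A; b \<in> ea_carrier A; a \<perp> b; a \<oplus> b = \<one>\<rbrakk> \<Longrightarrow> orthosupp a = b"
  unfolding orthosupp_def by (rule the1_equality[OF orthosupplement_ex1]) auto

lemma orthosupp_orthosupp: "a \<in> ea_carrier A \<Longrightarrow> orthosupp (orthosupp a) = a"
  using orthosupp_unique[OF orthosupp_closed] perp_commute plus_commute
    orthosupp_closed perp_orthosupp plus_orthosupp by metis

lemma orthosupp_one: "orthosupp \<one> = \<zero>"
  by (metis one_closed orthosupp_closed perp_orthosupp perp_commute perp_one_eq_zero)

text \<open>From \<open>1 \<perp> 0\<close> and \<open>1 \<oplus> 0 = 1\<close>, associativity moves \<open>0\<close> onto \<open>a\<^sup>\<perp>\<close>, and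
  then \<open>a\<^sup>\<perp> \<oplus> 0\<close> is an orthosupplement of \<open>a\<close>.\<close>

lemma perp_zero_plus_zero:
  assumes a: "a \<in> ea_carrier A" shows "a \<perp> \<zero> \<and> a \<oplus> \<zero> = a"
proof -
  let ?c = "orthosupp a"
  have one_zero: "\<one> \<perp> \<zero>" "\<one> \<oplus> \<zero> = \<one>"
    using perp_orthosupp[OF one_closed] plus_orthosupp[OF one_closed] by (simp_all add: orthosupp_one)
  have c: "?c \<in> ea_carrier A" "?c \<perp> a" "?c \<oplus> a = \<one>"
    using perp_commute[OF a] plus_commute[OF a] orthosupp_closed[OF a] perp_orthosupp[OF a]
      plus_orthosupp[OF a] by auto
  then have "a \<perp> \<zero>" "?c \<perp> a \<oplus> \<zero>" "?c \<oplus> (a \<oplus> \<zero>) = \<one>"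
    using plus_assoc[OF c(1) a zero_closed c(2)] one_zero by simp_all
  moreover have "a \<oplus> \<zero> \<in> ea_carrier A" using plus_closed[OF a zero_closed] calculation(1) .
  ultimately show ?thesis
    using orthosupp_unique[OF c(1), of "a \<oplus> \<zero>"] orthosupp_orthosupp[OF a] by simp
qed

lemma perp_zero: "a \<in> ea_carrier A \<Longrightarrow> a \<perp> \<zero>"
  and plus_zero: "a \<in> ea_carrier A \<Longrightarrow> a \<oplus> \<zero> = a"
  and zero_perp: "a \<in> ea_carrier A \<Longrightarrow> \<zero> \<perp> a"
  and zero_plus: "a \<in> ea_carrier A \<Longrightarrow> \<zero> \<oplus> a = a"
  using perp_zero_plus_zero perp_commute plus_commute zero_closed by metis+

end

lemma bool_ea_simps [simp]:
  "ea_carrier (bool_ea n) = Pow {1..n}"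
  "ea_one (bool_ea n) = {1..n}"
  "ea_zero (bool_ea n) = {}"
  "ea_perp (bool_ea n) x y \<longleftrightarrow> x \<inter> y = {}"
  "x \<inter> y = {} \<Longrightarrow> ea_plus (bool_ea n) x y = x \<union> y"
  by (auto simp: bool_ea_def ea_perp_def ea_plus_def)

lemma ea_hom_bool_ea_iff:
  "ea_hom (bool_ea n) B g \<longleftrightarrow>
    (\<forall>x \<subseteq> {1..n}. g x \<in> ea_carrier B) \<and> g {1..n} = ea_one B \<and>
    (\<forall>x \<subseteq> {1..n}. \<forall>y \<subseteq> {1..n}. x \<inter> y = {} \<longrightarrow>
       ea_perp B (g x) (g y) \<and> g (x \<union> y) = ea_plus B (g x) (g y))"
  unfolding ea_hom_def by auto

lemma ea_hom_bool_ea_closed: "\<lbrakk>ea_hom (bool_ea n) B g; x \<subseteq> {1..n}\<rbrakk> \<Longrightarrow> g x \<in> ea_carrier B"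
  and ea_hom_bool_ea_top: "ea_hom (bool_ea n) B g \<Longrightarrow> g {1..n} = ea_one B"
  and ea_hom_bool_ea_disjoint:
    "\<lbrakk>ea_hom (bool_ea n) B g; x \<subseteq> {1..n}; y \<subseteq> {1..n}; x \<inter> y = {}\<rbrakk>
       \<Longrightarrow> ea_perp B (g x) (g y) \<and> g (x \<union> y) = ea_plus B (g x) (g y)"
  unfolding ea_hom_bool_ea_iff by blast+

definition subset_hom :: "nat \<Rightarrow> nat set \<Rightarrow> nat set \<Rightarrow> nat set" where
  "subset_hom n x y = {i \<in> {1..n}. if i \<in> x then 1 \<in> y else 3 \<in> y}"

lemma bool_hom_subset_hom: "bool_hom 3 n (subset_hom n x)"
  unfolding bool_hom_def subset_hom_def by auto

lemma subset_hom_eq: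
  assumes "x \<subseteq> {1..n}"
  shows "subset_hom n x y = (if 1 \<in> y then x else {}) \<union> (if 3 \<in> y then {1..n} - x else {})"
  using assms unfolding subset_hom_def by auto

context eff_algebra
begin

lemma observable_empty: assumes g: "ea_hom (bool_ea n) A g" shows "g {} = \<zero>"
  using ea_hom_bool_ea_disjoint[OF g, of "{}" "{1..n}"] ea_hom_bool_ea_closed[OF g] ea_hom_bool_ea_top[OF g]
  by (simp add: perp_one_eq_zero)

lemma observable_compl:
  assumes g: "ea_hom (bool_ea n) A g" and x: "x \<subseteq> {1..n}"
  shows "g ({1..n} - x) = orthosupp (g x)"
proof -
  have "x \<union> ({1..n} - x) = {1..n}" using x by auto
  then have "g x \<perp> g ({1..n} - x)" "g x \<oplus> g ({1..n} - x) = \<one>"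
    using ea_hom_bool_ea_disjoint[OF g x, of "{1..n} - x"] ea_hom_bool_ea_top[OF g] by auto
  then show ?thesis
    using orthosupp_unique ea_hom_bool_ea_closed[OF g] x by (metis Diff_subset)
qed

definition partition_obs :: "'a \<Rightarrow> 'a \<Rightarrow> nat set \<Rightarrow> 'a" where
  "partition_obs a b y =
     (if 1 \<in> y then a else \<zero>) \<oplus> (if 2 \<in> y then b else \<zero>) \<oplus> (if 3 \<in> y then orthosupp (a \<oplus> b) else \<zero>)"

lemma partition_obs_hom:
  assumes a: "a \<in> ea_carrier A" and b: "b \<in> ea_carrier A" and ab: "a \<perp> b"
  shows "ea_hom (bool_ea 3) A (partition_obs a b)"
proof -
  define c where "c = orthosupp (a \<oplus> b)"
  have ab_closed: "a \<oplus> b \<in> ea_carrier A" using plus_closed[OF a b ab] .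
  have c: "c \<in> ea_carrier A" "a \<oplus> b \<perp> c" "a \<oplus> b \<oplus> c = \<one>"
    unfolding c_def using orthosupp_closed perp_orthosupp plus_orthosupp ab_closed by auto
  have bc: "b \<perp> c" "a \<perp> b \<oplus> c" "a \<oplus> (b \<oplus> c) = \<one>"
    using plus_assoc[OF a b c(1) ab c(2)] c(3) by auto
  have ac: "a \<perp> c" "b \<perp> a \<oplus> c" "b \<oplus> (a \<oplus> c) = \<one>"
    using plus_assoc[OF b a c(1)] perp_commute[OF a b ab] plus_commute[OF a b ab] c by auto
  have closed: "b \<oplus> c \<in> ea_carrier A" "a \<oplus> c \<in> ea_carrier A"
    using plus_closed a b c(1) bc(1) ac(1) by auto
  have swapped: "b \<perp> a" "b \<oplus> a = a \<oplus> b" "c \<perp> a" "c \<oplus> a = a \<oplus> c" "c \<perp> b" "c \<oplus> b = b \<oplus> c"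
    "c \<perp> a \<oplus> b" "c \<oplus> (a \<oplus> b) = \<one>" "b \<oplus> c \<perp> a" "b \<oplus> c \<oplus> a = \<one>" "a \<oplus> c \<perp> b" "a \<oplus> c \<oplus> b = \<one>"
    using perp_commute plus_commute a b c ab_closed closed ab bc ac by metis+
  note facts = a b c ab_closed closed ab bc ac swapped zero_closed one_closed
    perp_zero plus_zero zero_perp zero_plus
  have "partition_obs a b x \<perp> partition_obs a b y \<and>
      partition_obs a b (x \<union> y) = partition_obs a b x \<oplus> partition_obs a b y"
    if "x \<inter> y = {}" for x y
  proof -
    have "1 \<in> x \<Longrightarrow> 1 \<notin> y" "2 \<in> x \<Longrightarrow> 2 \<notin> y" "3 \<in> x \<Longrightarrow> 3 \<notin> y" using that by auto
    then show ?thesis unfolding partition_obs_def c_def[symmetric]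
      by (cases "1 \<in> x"; cases "1 \<in> y"; cases "2 \<in> x"; cases "2 \<in> y"; cases "3 \<in> x"; cases "3 \<in> y")
        (simp_all add: facts)
  qed
  moreover have "partition_obs a b x \<in> ea_carrier A" for x
    unfolding partition_obs_def c_def[symmetric] by (simp add: facts)
  moreover have "partition_obs a b {1..3} = \<one>"
    unfolding partition_obs_def c_def[symmetric] by (simp add: facts)
  ultimately show ?thesis unfolding ea_hom_bool_ea_iff by blast
qed

lemma partition_obs_singletons:
  assumes "a \<in> ea_carrier A" "b \<in> ea_carrier A" "a \<perp> b"
  shows "partition_obs a b {1} = a" "partition_obs a b {2} = b" "partition_obs a b {1, 2} = a \<oplus> b"
  using assms by (simp_all add: partition_obs_def perp_zero plus_zero zero_perp zero_plus zero_closed plus_closed)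

lemma elem_arr_subset_hom:
  assumes g: "elem_obj A n g" and x: "x \<subseteq> {1..n}"
  shows "elem_arr A 3 (partition_obs (g x) \<zero>) n g (subset_hom n x)"
proof -
  have hom: "ea_hom (bool_ea n) A g" using g unfolding elem_obj_def .
  have gx: "g x \<in> ea_carrier A" using ea_hom_bool_ea_closed[OF hom x] .
  have "g (subset_hom n x y) = partition_obs (g x) \<zero> y" for y
  proof -
    have "g (subset_hom n x y) =
        g (if 1 \<in> y then x else {}) \<oplus> g (if 3 \<in> y then {1..n} - x else {})"
      unfolding subset_hom_eq[OF x] using ea_hom_bool_ea_disjoint[OF hom] x by auto
    then show ?thesis
      unfolding partition_obs_def using gx observable_empty[OF hom] observable_compl[OF hom x]
      by (simp add: plus_zero zero_plus perp_zero zero_closed orthosupp_closed)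
  qed
  then show ?thesis
    unfolding elem_arr_def elem_obj_def
    using partition_obs_hom[OF gx zero_closed perp_zero[OF gx]] hom bool_hom_subset_hom by simp
qed

definition mediator :: "(nat \<Rightarrow> (nat set \<Rightarrow> 'a) \<Rightarrow> nat set \<Rightarrow> 'b) \<Rightarrow> 'a \<Rightarrow> 'b" where
  "mediator h a = h 3 (partition_obs a \<zero>) {1}"

lemma mediates_mediator:
  assumes h: "cocone_DA A B h"
  shows "mediates A (\<lambda>n g. g) h (mediator h)"
  unfolding mediates_def
proof (intro allI impI ballI)
  fix n g x assume g: "elem_obj A n g" and x: "x \<in> Pow {1..n}"
  have "h n g (subset_hom n x {1}) = h 3 (partition_obs (g x) \<zero>) {1}"
    using h elem_arr_subset_hom[OF g] x unfolding cocone_DA_def by simp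
  moreover have "subset_hom n x {1} = x" using x by (simp add: subset_hom_eq)
  ultimately show "mediator h (g x) = h n g x" unfolding mediator_def by simp
qed

lemma ea_hom_mediator:
  assumes h: "cocone_DA A B h"
  shows "ea_hom A B (mediator h)"
proof -
  note med = mediates_mediator[OF h, unfolded mediates_def, rule_format]
  have h_hom: "ea_hom (bool_ea n) B (h n g)" if "elem_obj A n g" for n g
    using h that unfolding cocone_DA_def by blast
  have obs: "elem_obj A 3 (partition_obs a b)" if "a \<in> ea_carrier A" "b \<in> ea_carrier A" "a \<perp> b" for a b
    unfolding elem_obj_def using partition_obs_hom that .
  have obs_zero: "elem_obj A 3 (partition_obs a \<zero>)" if "a \<in> ea_carrier A" for a
    using obs that zero_closed perp_zero by blast
  have "mediator h a \<in> ea_carrier B" if "a \<in> ea_carrier A" for a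
    unfolding mediator_def using h_hom[OF obs_zero[OF that]] unfolding ea_hom_def by simp
  moreover have "mediator h \<one> = ea_one B"
    using med[OF obs_zero[OF zero_closed], of "{1..3}"] h_hom[OF obs_zero[OF zero_closed]]
      ea_hom_bool_ea_top[OF obs_zero[OF zero_closed, unfolded elem_obj_def]]
    unfolding ea_hom_def by simp
  moreover have "ea_perp B (mediator h a) (mediator h b) \<and>
      mediator h (a \<oplus> b) = ea_plus B (mediator h a) (mediator h b)"
    if a: "a \<in> ea_carrier A" and b: "b \<in> ea_carrier A" and ab: "a \<perp> b" for a b
  proof -
    let ?g = "h 3 (partition_obs a b)"
    have "ea_perp B (?g {1}) (?g {2}) \<and> ?g ({1} \<union> {2}) = ea_plus B (?g {1}) (?g {2})"
      using ea_hom_bool_ea_disjoint[OF h_hom[OF obs[OF a b ab]], of "{1}" "{2}"] by simp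
    then show ?thesis
      using med[OF obs[OF a b ab], of "{1}"] med[OF obs[OF a b ab], of "{2}"]
        med[OF obs[OF a b ab], of "{1, 2}"] partition_obs_singletons[OF a b ab]
      by (simp add: insert_commute)
  qed
  ultimately show ?thesis unfolding ea_hom_def by blast
qed

lemma mediator_unique:
  assumes v: "mediates A (\<lambda>n g. g) h v" and a: "a \<in> ea_carrier A"
  shows "v a = mediator h a"
proof -
  have "elem_obj A 3 (partition_obs a \<zero>)"
    unfolding elem_obj_def using partition_obs_hom[OF a zero_closed perp_zero[OF a]] .
  then have "v (partition_obs a \<zero> {1}) = h 3 (partition_obs a \<zero>) {1}"
    using v unfolding mediates_def by simp
  then show ?thesis
    unfolding mediator_def partition_obs_singletons(1)[OF a zero_closed perp_zero[OF a]] .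
qed

end

lemma cocone_DA_id: "cocone_DA A A (\<lambda>n g. g)"
  unfolding cocone_DA_def elem_arr_def elem_obj_def by blast

theorem mainTheorem1:
  fixes A :: "'a eff_alg"
  assumes "effect_algebra A"
  shows "colimiting_DA A A (\<lambda>n g. g) TYPE('b)"
proof -
  interpret eff_algebra A by (rule eff_algebra.intro) fact
  show ?thesis
    unfolding colimiting_DA_def
    using cocone_DA_id ea_hom_mediator mediates_mediator mediator_unique by blast
qed

end
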